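(* For all integers $0 \le r \le m$ for which $H(r,m)$ is defined below, $H(r,m)$ is a generator matrix for the Reed–Muller code $\mathcal{R}(r,m)$ and hence a parity-check matrix for $\mathcal{R}(m-r-1,m)$.
   Context: All matrices are binary. The matrices $G(r,m)$, $0\le r\le m$, are defined recursively by $G(m,m) = I_{2^m}$ (identity), $G(0,m) = (11\cdots1)$ (all-ones row of length $2^m$), and for $0<r<m$, $$G(r,m) = \begin{pmatrix} G(r,m-1) & G(r,m-1) \\ \mathbf{0} & G(r-1,m-1)\end{pmatrix}.$$ The binary Reed–Muller code $\mathcal{R}(r,m)$ of order $r$ and length $2^m$ is the row space of $G(r,m)$; by convention $\mathcal{R}(-1,m)=\{\mathbf 0\}$, and $\mathcal{R}(r,m)^\perp = \mathcal{R}(m-r-1,m)$. A parity-check matrix for a code $\mathcal{C}$ is any matrix whose rows span $\mathcal{C}^\perp$. The matrices $H(r,m)$ are defined as follows: for all $m \ge 0$, $H(0,m) = (11\cdots1)$ (length $2^m$), $H(m-1,m) = G(m-1,m)$, $H(m,m) = I_{2^m}$; and for all positive integers $m$ and $r = 1,2,\ldots,m-2$, $$H(r,m) = \begin{pmatrix} H(r,m-1) & H(r,m-1) \\ \mathbf{0} & H(r-1,m-1) \\ H(r-1,m-1) & \mathbf{0}\end{pmatrix}.$$ *)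

theory Defs
  imports Main "HOL-Library.Z2"
begin

text \<open>Binary vectors are lists over the field GF(2) (type bit); a binary matrix is
  the list of its rows.\<close>

type_synonym bvec = "bit list"
type_synonym bmat = "bit list list"

definition vadd :: "bvec \<Rightarrow> bvec \<Rightarrow> bvec" where
  "vadd xs ys = map2 (+) xs ys"

definition idm :: "nat \<Rightarrow> bmat" where
  "idm n = map (\<lambda>i. map (\<lambda>j. if i = j then 1 else 0) [0..<n]) [0..<n]"

definition ones :: "nat \<Rightarrow> bvec" where
  "ones n = replicate n 1"

definition zeros :: "nat \<Rightarrow> bvec" where
  "zeros n = replicate n 0"

text \<open>Block matrix (A A; 0 B), where the zero block has width w.\<close>
definition blk2 :: "bmat \<Rightarrow> bmat \<Rightarrow> nat \<Rightarrow> bmat" where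
  "blk2 A B w = map (\<lambda>x. x @ x) A @ map (\<lambda>x. zeros w @ x) B"

text \<open>Block matrix (A A; 0 B; B 0), where the zero blocks have width w.\<close>
definition blk3 :: "bmat \<Rightarrow> bmat \<Rightarrow> nat \<Rightarrow> bmat" where
  "blk3 A B w = map (\<lambda>x. x @ x) A @ map (\<lambda>x. zeros w @ x) B @ map (\<lambda>x. x @ zeros w) B"

text \<open>G(r,m) for 0 \<le> r \<le> m (value for r > m is irrelevant).\<close>
fun G :: "nat \<Rightarrow> nat \<Rightarrow> bmat" where
  "G r 0 = (if r = 0 then idm 1 else [])"
| "G r (Suc m) =
     (if r = Suc m then idm (2 ^ Suc m)
      else if r = 0 then [ones (2 ^ Suc m)]
      else if r < Suc m then blk2 (G r m) (G (r - 1) m) (2 ^ m)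
      else [])"

fun H :: "nat \<Rightarrow> nat \<Rightarrow> bmat" where
  "H r 0 = (if r = 0 then [ones 1] else [])"
| "H r (Suc m) =
     (if r = Suc m then idm (2 ^ Suc m)
      else if r = 0 then [ones (2 ^ Suc m)]
      else if r = m then G m (Suc m)
      else if r < m then blk3 (H r m) (H (r - 1) m) (2 ^ m)
      else [])"

definition lincomb :: "nat \<Rightarrow> bit list \<Rightarrow> bmat \<Rightarrow> bvec" where
  "lincomb n c M = foldr (\<lambda>(a, row) acc. vadd (map ((*) a) row) acc) (zip c M) (zeros n)"

definition rowspace :: "nat \<Rightarrow> bmat \<Rightarrow> bvec set" where
  "rowspace n M = {lincomb n c M | c. length c = length M}"

definition dot :: "bvec \<Rightarrow> bvec \<Rightarrow> bit" where
  "dot v w = sum_list (map2 (*) v w)"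

definition dual :: "nat \<Rightarrow> bvec set \<Rightarrow> bvec set" where
  "dual n C = {v. length v = n \<and> (\<forall>w\<in>C. dot v w = 0)}"

definition RM :: "int \<Rightarrow> nat \<Rightarrow> bvec set" where
  "RM r m = (if r < 0 then {zeros (2 ^ m)} else rowspace (2 ^ m) (G (nat r) m))"

definition is_generator_matrix :: "nat \<Rightarrow> bmat \<Rightarrow> bvec set \<Rightarrow> bool" where
  "is_generator_matrix n M C \<longleftrightarrow> (\<forall>row\<in>set M. length row = n) \<and> rowspace n M = C"

definition is_parity_check_matrix :: "nat \<Rightarrow> bmat \<Rightarrow> bvec set \<Rightarrow> bool" where
  "is_parity_check_matrix n M C \<longleftrightarrow> (\<forall>row\<in>set M. length row = n) \<and> rowspace n M = dual n C"

end

theory Submission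
  imports Defs
begin

text \<open>Let R(s,m) (rm_code s m below) be given by the Plotkin recursion
  R(s,m+1) = {(u | u+v) : u \<in> R(s,m), v \<in> R(s-1,m)}, starting from R(s,0) = {0} for s < 0
  and R(s,0) = GF(2) otherwise. The block form of G(r,m) realises this recursion, so
  RM(r,m) = R(r,m). The matrix H(r,m) has the additional rows (v | 0) for v a row of
  H(r-1,m); since (v | 0) = (v | v+v) and R(r-1,m) \<subseteq> R(r,m), they lie in the span of the
  other rows, so H(r,m) generates R(r,m) as well. For the parity-check part, the identity
  (a | b)\<cdot>(u | u+v) = (a+b)\<cdot>u + b\<cdot>v shows that for nested codes V \<subseteq> U the dual of
  {(u | u+v) : u \<in> U, v \<in> V} is {(p | p+q) : p \<in> V^\<bottom>, q \<in> U^\<bottom>}; by induction on m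
  this gives R(s,m)^\<bottom> = R(m-s-1,m).\<close>

text \<open>By default HOL-Library.Z2 rewrites (+) and (*) on bit into xor and and; keep the
  field operations of GF(2) instead, so that ring lemmas apply.\<close>

declare add_bit_eq_xor [simp del] mult_bit_eq_and [simp del]

lemma bit_add_self [simp]: "(x::bit) + x = 0"
  by (cases x) simp_all

lemma length_vadd [simp]: "length (vadd x y) = min (length x) (length y)"
  by (simp add: vadd_def)

lemma nth_vadd [simp]: "i < length x \<Longrightarrow> i < length y \<Longrightarrow> vadd x y ! i = x ! i + y ! i"
  by (simp add: vadd_def)

lemma length_zeros [simp]: "length (zeros n) = n"
  by (simp add: zeros_def)

lemma nth_zeros [simp]: "i < n \<Longrightarrow> zeros n ! i = 0"
  by (simp add: zeros_def)

lemma length_ones [simp]: "length (ones n) = n"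
  by (simp add: ones_def)

lemma zeros_add: "zeros (a + b) = zeros a @ zeros b"
  by (simp add: zeros_def replicate_add)

lemma ones_add: "ones (a + b) = ones a @ ones b"
  by (simp add: ones_def replicate_add)

lemma vadd_assoc: "vadd (vadd x y) z = vadd x (vadd y z)"
  by (rule nth_equalityI) (auto simp: add.assoc)

lemma vadd_commute: "vadd x y = vadd y x"
  by (rule nth_equalityI) (auto simp: add.commute)

lemma vadd_zeros_left: "length v \<le> n \<Longrightarrow> vadd (zeros n) v = v"
  by (rule nth_equalityI) auto

lemma vadd_zeros_right: "length v \<le> n \<Longrightarrow> vadd v (zeros n) = v"
  by (rule nth_equalityI) auto

lemma vadd_self: "vadd x x = zeros (length x)"
  by (rule nth_equalityI) auto

lemma vadd_cancel_left: "length x = length y \<Longrightarrow> vadd x (vadd x y) = y"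
  by (simp add: vadd_assoc [symmetric] vadd_self vadd_zeros_left)

lemma vadd_Cons: "vadd (a # x) (b # y) = (a + b) # vadd x y"
  by (simp add: vadd_def)

lemma vadd_append: "length a = length c \<Longrightarrow> vadd (a @ b) (c @ d) = vadd a c @ vadd b d"
  by (simp add: vadd_def)

lemma append_halves_set_eqI:
  assumes "\<forall>x\<in>X. length x = n + n" "\<forall>x\<in>Y. length x = n + n"
    and "\<And>a b. length a = n \<Longrightarrow> length b = n \<Longrightarrow> a @ b \<in> X \<longleftrightarrow> a @ b \<in> Y"
  shows "X = Y"
proof (intro set_eqI)
  fix x
  have "x \<in> X \<longleftrightarrow> x \<in> Y" if "length x = n + n"
    using assms(3)[of "take n x" "drop n x"] that by simp
  then show "x \<in> X \<longleftrightarrow> x \<in> Y" using assms(1,2) by blast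
qed

lemma lincomb_Cons: "lincomb n (a # c) (x # M) = vadd (map ((*) a) x) (lincomb n c M)"
  by (simp add: lincomb_def)

lemma length_lincomb_le: "length (lincomb n c M) \<le> n"
proof (induction c arbitrary: M)
  case Nil
  then show ?case by (simp add: lincomb_def)
next
  case (Cons a c)
  then show ?case by (cases M) (auto simp: lincomb_def min_le_iff_disj)
qed

lemma rowspace_Nil [simp]: "rowspace n [] = {zeros n}"
  by (simp add: rowspace_def lincomb_def)

lemma rowspace_Cons:
  assumes "length x = n"
  shows "rowspace n (x # M) = rowspace n M \<union> vadd x ` rowspace n M"
proof -
  have scaled: "map ((*) a) x = (if a = 0 then zeros n else x)" for a :: bit
    using assms by (cases a) (auto intro: nth_equalityI)
  have len: "length v \<le> n" if "v \<in> rowspace n M" for v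
    using that length_lincomb_le by (auto simp: rowspace_def)
  have "rowspace n (x # M) = (\<Union>a. vadd (map ((*) a) x) ` rowspace n M)"
  proof (intro equalityI subsetI)
    fix w assume "w \<in> rowspace n (x # M)"
    then obtain a c where "w = lincomb n (a # c) (x # M)" "length c = length M"
      by (auto simp: rowspace_def length_Suc_conv)
    then show "w \<in> (\<Union>a. vadd (map ((*) a) x) ` rowspace n M)"
      by (auto simp: rowspace_def lincomb_Cons)
  next
    fix w assume "w \<in> (\<Union>a. vadd (map ((*) a) x) ` rowspace n M)"
    then obtain a c where "w = lincomb n (a # c) (x # M)" "length c = length M"
      by (auto simp: rowspace_def lincomb_Cons)
    then show "w \<in> rowspace n (x # M)"
      unfolding rowspace_def by (intro CollectI exI[of _ "a # c"]) simp
  qed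
  also have "\<dots> = vadd (zeros n) ` rowspace n M \<union> vadd x ` rowspace n M"
    unfolding scaled by (auto intro: bit.exhaust)
  also have "vadd (zeros n) ` rowspace n M = rowspace n M"
    using len vadd_zeros_left by (simp cong: image_cong)
  finally show ?thesis .
qed

lemma length_rowspace:
  "\<forall>row\<in>set M. length row = n \<Longrightarrow> v \<in> rowspace n M \<Longrightarrow> length v = n"
  by (induction M arbitrary: v) (auto simp: rowspace_Cons)

lemma zeros_in_rowspace: "\<forall>row\<in>set M. length row = n \<Longrightarrow> zeros n \<in> rowspace n M"
  by (induction M) (auto simp: rowspace_Cons)

lemma vadd_in_rowspace:
  assumes "\<forall>row\<in>set M. length row = n" "v \<in> rowspace n M" "w \<in> rowspace n M"
  shows "vadd v w \<in> rowspace n M"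
  using assms
proof (induction M arbitrary: v w)
  case Nil
  then show ?case by (simp add: vadd_self)
next
  case (Cons x M)
  let ?R = "rowspace n M"
  have lx: "length x = n" and rows: "\<forall>row\<in>set M. length row = n"
    using Cons.prems(1) by auto
  have closed: "vadd a b \<in> ?R" if "a \<in> ?R" "b \<in> ?R" for a b
    using Cons.IH rows that by blast
  have shift: "vadd a (vadd x b) = vadd x (vadd a b)" if "a \<in> ?R" "b \<in> ?R" for a b
    using that length_rowspace[OF rows] lx by (auto intro: nth_equalityI simp: ac_simps)
  have cancel: "vadd (vadd x a) (vadd x b) = vadd a b" if "a \<in> ?R" "b \<in> ?R" for a b
    using that length_rowspace[OF rows] lx by (simp add: vadd_assoc shift vadd_cancel_left)
  from Cons.prems(2,3) show ?case
    unfolding rowspace_Cons[OF lx]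
  proof (elim UnE imageE)
    fix a b assume "v = vadd x a" "a \<in> ?R" "w = vadd x b" "b \<in> ?R"
    then show "vadd v w \<in> ?R \<union> vadd x ` ?R" using closed cancel by simp
  next
    fix a assume "v = vadd x a" "a \<in> ?R" "w \<in> ?R"
    then show "vadd v w \<in> ?R \<union> vadd x ` ?R" using closed vadd_assoc by blast
  next
    fix b assume "v \<in> ?R" "w = vadd x b" "b \<in> ?R"
    then show "vadd v w \<in> ?R \<union> vadd x ` ?R" using closed shift by blast
  qed (use closed in blast)
qed

lemma rowspace_map_linear:
  assumes "\<forall>row\<in>set M. length row = n" and "L (zeros n) = zeros n'"
    and "\<And>x v. length x = n \<Longrightarrow> length v = n \<Longrightarrow> L (vadd x v) = vadd (L x) (L v)"
    and "\<And>x. length x = n \<Longrightarrow> length (L x) = n'"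
  shows "rowspace n' (map L M) = L ` rowspace n M"
  using assms(1)
proof (induction M)
  case Nil
  then show ?case by (simp add: assms(2))
next
  case (Cons x M)
  have lx: "length x = n" and rows: "\<forall>row\<in>set M. length row = n"
    using Cons.prems by auto
  have "vadd (L x) ` L ` rowspace n M = L ` vadd x ` rowspace n M"
    using assms(3) lx length_rowspace[OF rows] by (auto simp: image_image intro!: image_cong)
  then show ?case
    using Cons.IH[OF rows] by (simp add: rowspace_Cons lx assms(4) image_Un)
qed

definition sumset :: "bvec set \<Rightarrow> bvec set \<Rightarrow> bvec set" where
  "sumset P Q = {vadd p q | p q. p \<in> P \<and> q \<in> Q}"

lemma rowspace_append:
  assumes "\<forall>row\<in>set M. length row = n" "\<forall>row\<in>set N. length row = n"
  shows "rowspace n (M @ N) = sumset (rowspace n M) (rowspace n N)"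
  using assms(1)
proof (induction M)
  case Nil
  have "vadd (zeros n) q = q" if "q \<in> rowspace n N" for q
    using length_rowspace[OF assms(2) that] vadd_zeros_left by simp
  then show ?case by (force simp: sumset_def)
next
  case (Cons x M)
  have lx: "length x = n" using Cons.prems by simp
  have shift: "sumset (P \<union> vadd x ` P) Q = sumset P Q \<union> vadd x ` sumset P Q" for P Q
  proof (intro equalityI subsetI)
    fix w assume "w \<in> sumset (P \<union> vadd x ` P) Q"
    then obtain p q where "w = vadd p q" "p \<in> P \<union> vadd x ` P" "q \<in> Q"
      by (auto simp: sumset_def)
    then show "w \<in> sumset P Q \<union> vadd x ` sumset P Q"
      by (force simp: sumset_def vadd_assoc)
  next
    fix w assume "w \<in> sumset P Q \<union> vadd x ` sumset P Q"
    then show "w \<in> sumset (P \<union> vadd x ` P) Q"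
      by (force simp: sumset_def simp flip: vadd_assoc)
  qed
  have IH: "rowspace n (M @ N) = sumset (rowspace n M) (rowspace n N)"
    using Cons by simp
  show ?case
    by (simp only: append_Cons rowspace_Cons[OF lx] IH shift)
qed

lemma rowspace_append_redundant:
  assumes M: "\<forall>row\<in>set M. length row = n" and N: "\<forall>row\<in>set N. length row = n"
    and sub: "rowspace n N \<subseteq> rowspace n M"
  shows "rowspace n (M @ N) = rowspace n M"
  unfolding rowspace_append[OF M N]
proof (intro equalityI subsetI)
  fix w assume "w \<in> sumset (rowspace n M) (rowspace n N)"
  then show "w \<in> rowspace n M"
    using sub vadd_in_rowspace[OF M] by (auto simp: sumset_def)
next
  fix p assume p: "p \<in> rowspace n M"
  then have "p = vadd p (zeros n)" using length_rowspace[OF M p] vadd_zeros_right by simp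
  with p show "p \<in> sumset (rowspace n M) (rowspace n N)"
    using zeros_in_rowspace[OF N] unfolding sumset_def by blast
qed

lemma idm_Suc: "idm (Suc n) = (1 # zeros n) # map ((#) 0) (idm n)"
  by (rule nth_equalityI; force simp: idm_def nth_Cons' simp del: upt_Suc intro!: nth_equalityI)

lemma rowspace_idm: "rowspace n (idm n) = {v. length v = n}"
proof (induction n)
  case 0
  then show ?case by (auto simp: idm_def zeros_def)
next
  case (Suc n)
  have "rowspace (Suc n) (map ((#) 0) (idm n)) = (#) 0 ` rowspace n (idm n)"
    by (rule rowspace_map_linear) (auto simp: idm_def zeros_def vadd_Cons)
  moreover have "vadd (1 # zeros n) ` (#) 0 ` {v. length v = n} = (#) 1 ` {v. length v = n}"
    unfolding image_image by (rule image_cong) (simp_all add: vadd_Cons vadd_zeros_left)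
  ultimately have "rowspace (Suc n) (idm (Suc n)) =
      (#) 0 ` {v. length v = n} \<union> (#) 1 ` {v. length v = n}"
    unfolding idm_Suc by (simp add: Suc rowspace_Cons)
  also have "\<dots> = {v. length v = Suc n}"
    by (auto simp: length_Suc_conv intro: bit.exhaust)
  finally show ?case .
qed

lemma rowspace_ones: "rowspace n [ones n] = {zeros n, ones n}"
  by (auto simp: rowspace_Cons vadd_zeros_right)

section \<open>The Plotkin construction\<close>

definition plotkin :: "bvec set \<Rightarrow> bvec set \<Rightarrow> bvec set" where
  "plotkin U V = {u @ vadd u v | u v. u \<in> U \<and> v \<in> V}"

lemma append_in_plotkin_iff:
  assumes "\<forall>u\<in>U. length u = n" "\<forall>v\<in>V. length v = n" "length a = n" "length b = n"
  shows "a @ b \<in> plotkin U V \<longleftrightarrow> a \<in> U \<and> vadd a b \<in> V"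
proof
  assume "a @ b \<in> plotkin U V"
  then obtain u v where "a @ b = u @ vadd u v" "u \<in> U" "v \<in> V"
    by (auto simp: plotkin_def)
  with assms show "a \<in> U \<and> vadd a b \<in> V"
    by (auto simp: append_eq_append_conv vadd_cancel_left)
next
  assume "a \<in> U \<and> vadd a b \<in> V"
  moreover have "b = vadd a (vadd a b)" using assms by (simp add: vadd_cancel_left)
  ultimately show "a @ b \<in> plotkin U V" unfolding plotkin_def by blast
qed

lemma length_plotkin:
  "\<forall>u\<in>U. length u = n \<Longrightarrow> \<forall>v\<in>V. length v = n \<Longrightarrow> w \<in> plotkin U V \<Longrightarrow> length w = n + n"
  by (auto simp: plotkin_def)

lemma plotkin_zeros: "\<forall>u\<in>U. length u = n \<Longrightarrow> plotkin U {zeros n} = (\<lambda>u. u @ u) ` U"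
  by (force simp: plotkin_def vadd_zeros_right)

lemma plotkin_mono: "U \<subseteq> U' \<Longrightarrow> V \<subseteq> V' \<Longrightarrow> plotkin U V \<subseteq> plotkin U' V'"
  by (auto simp: plotkin_def)

lemma plotkin_full: "plotkin {v. length v = n} {v. length v = n} = {v. length v = n + n}"
proof (intro equalityI subsetI)
  fix w :: bvec assume "w \<in> {v. length v = n + n}"
  then have "take n w @ drop n w \<in> plotkin {v. length v = n} {v. length v = n}"
    by (subst append_in_plotkin_iff[where n = n]) auto
  then show "w \<in> plotkin {v. length v = n} {v. length v = n}" by simp
qed (auto simp: plotkin_def)

lemma length_blk2_rows:
  "\<forall>row\<in>set A. length row = w \<Longrightarrow> \<forall>row\<in>set B. length row = w \<Longrightarrow>
    \<forall>row\<in>set (blk2 A B w). length row = w + w"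
  by (auto simp: blk2_def)

lemma length_blk3_rows:
  "\<forall>row\<in>set A. length row = w \<Longrightarrow> \<forall>row\<in>set B. length row = w \<Longrightarrow>
    \<forall>row\<in>set (blk3 A B w). length row = w + w"
  by (auto simp: blk3_def)

lemma rowspace_blk2:
  assumes A: "\<forall>row\<in>set A. length row = w" and B: "\<forall>row\<in>set B. length row = w"
  shows "rowspace (w + w) (blk2 A B w) = plotkin (rowspace w A) (rowspace w B)"
proof -
  have rows: "\<forall>row\<in>set (map (\<lambda>x. x @ x) A). length row = w + w"
    "\<forall>row\<in>set (map (\<lambda>x. zeros w @ x) B). length row = w + w"
    using A B by auto
  have doubled: "rowspace (w + w) (map (\<lambda>x. x @ x) A) = (\<lambda>x. x @ x) ` rowspace w A"
    by (rule rowspace_map_linear) (auto simp: A zeros_add vadd_append)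
  have shifted:
    "rowspace (w + w) (map (\<lambda>x. zeros w @ x) B) = (\<lambda>x. zeros w @ x) ` rowspace w B"
    by (rule rowspace_map_linear) (auto simp: B zeros_add vadd_append vadd_zeros_left)
  have block_add: "vadd (a @ a) (zeros w @ b) = a @ vadd a b" if "a \<in> rowspace w A" for a b
    using length_rowspace[OF A that] by (simp add: vadd_append vadd_zeros_right)
  show ?thesis
    unfolding blk2_def rowspace_append[OF rows] doubled shifted
  proof (intro equalityI subsetI)
    fix x assume "x \<in> sumset ((\<lambda>x. x @ x) ` rowspace w A) ((@) (zeros w) ` rowspace w B)"
    then obtain a b where "x = vadd (a @ a) (zeros w @ b)" "a \<in> rowspace w A" "b \<in> rowspace w B"
      by (auto simp: sumset_def)
    moreover from this have "x = a @ vadd a b" using block_add by simp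
    ultimately show "x \<in> plotkin (rowspace w A) (rowspace w B)"
      unfolding plotkin_def by blast
  next
    fix x assume "x \<in> plotkin (rowspace w A) (rowspace w B)"
    then obtain a b where "x = a @ vadd a b" "a \<in> rowspace w A" "b \<in> rowspace w B"
      by (auto simp: plotkin_def)
    moreover from this have "x = vadd (a @ a) (zeros w @ b)" using block_add by simp
    ultimately show "x \<in> sumset ((\<lambda>x. x @ x) ` rowspace w A) ((@) (zeros w) ` rowspace w B)"
      unfolding sumset_def by blast
  qed
qed

lemma blk3_eq_blk2_append: "blk3 A B w = blk2 A B w @ map (\<lambda>x. x @ zeros w) B"
  by (simp add: blk3_def blk2_def)

lemma rowspace_blk3:
  assumes A: "\<forall>row\<in>set A. length row = w" and B: "\<forall>row\<in>set B. length row = w"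
    and sub: "rowspace w B \<subseteq> rowspace w A"
  shows "rowspace (w + w) (blk3 A B w) = plotkin (rowspace w A) (rowspace w B)"
proof -
  have extra_rows: "\<forall>row\<in>set (map (\<lambda>x. x @ zeros w) B). length row = w + w"
    using B by auto
  have "rowspace (w + w) (map (\<lambda>x. x @ zeros w) B) = (\<lambda>x. x @ zeros w) ` rowspace w B"
    by (rule rowspace_map_linear) (auto simp: B zeros_add vadd_append vadd_zeros_left)
  also have "\<dots> \<subseteq> plotkin (rowspace w A) (rowspace w B)"
  proof
    fix x assume "x \<in> (\<lambda>x. x @ zeros w) ` rowspace w B"
    then obtain b where "x = b @ vadd b b" "b \<in> rowspace w B"
      using length_rowspace[OF B] by (auto simp: vadd_self)
    then show "x \<in> plotkin (rowspace w A) (rowspace w B)"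
      using sub unfolding plotkin_def by blast
  qed
  finally show ?thesis
    unfolding blk3_eq_blk2_append rowspace_blk2[OF A B, symmetric]
    by (rule rowspace_append_redundant[OF length_blk2_rows[OF A B] extra_rows])
qed

section \<open>Inner product and dual codes\<close>

lemma dot_Nil [simp]: "dot [] v = 0" "dot v [] = 0"
  by (simp_all add: dot_def)

lemma dot_Cons [simp]: "dot (a # x) (b # y) = a * b + dot x y"
  by (simp add: dot_def)

lemma dot_append: "length a = length c \<Longrightarrow> dot (a @ b) (c @ d) = dot a c + dot b d"
  by (simp add: dot_def)

lemma dot_commute: "dot x y = dot y x"
proof (induction x arbitrary: y)
  case (Cons a x)
  then show ?case by (cases y) (auto simp: mult.commute)
qed simp

lemma dot_vadd_left:
  "length x = length y \<Longrightarrow> length z = length x \<Longrightarrow> dot (vadd x y) z = dot x z + dot y z"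
proof (induction x arbitrary: y z)
  case Nil
  then show ?case by (simp add: dot_def vadd_def)
next
  case (Cons a x)
  then show ?case by (cases y; cases z) (auto simp: vadd_Cons algebra_simps)
qed

lemma dot_vadd_right:
  "length x = length y \<Longrightarrow> length z = length x \<Longrightarrow> dot z (vadd x y) = dot z x + dot z y"
  using dot_vadd_left dot_commute by metis

lemma dot_zeros_left [simp]: "dot (zeros n) v = 0"
proof (induction n arbitrary: v)
  case (Suc n)
  then show ?case by (cases v) (auto simp: zeros_def)
qed (simp add: zeros_def)

lemma dot_zeros_right [simp]: "dot v (zeros n) = 0"
  using dot_zeros_left dot_commute by metis

lemma length_dual: "v \<in> dual n U \<Longrightarrow> length v = n"
  by (simp add: dual_def)

lemma dual_antimono: "V \<subseteq> U \<Longrightarrow> dual n U \<subseteq> dual n V"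
  by (auto simp: dual_def)

lemma vadd_in_dual:
  assumes "\<forall>u\<in>U. length u = n" "x \<in> dual n U" "y \<in> dual n U"
  shows "vadd x y \<in> dual n U"
  using assms by (auto simp: dual_def dot_vadd_left)

lemma dual_zeros: "dual n {zeros n} = {v. length v = n}"
  by (simp add: dual_def)

lemma dual_full: "dual n {v. length v = n} = {zeros n}"
proof (induction n)
  case 0
  then show ?case by (auto simp: dual_def zeros_def)
next
  case (Suc n)
  have "v = zeros (Suc n)" if v: "v \<in> dual (Suc n) {v. length v = Suc n}" for v
  proof -
    obtain a w where vw: "v = a # w" "length w = n"
      using length_dual[OF v] by (auto simp: length_Suc_conv)
    have "dot v (1 # zeros n) = 0" "\<forall>u. length u = n \<longrightarrow> dot v (0 # u) = 0"
      using v by (auto simp: dual_def)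
    then have "a = 0" "w \<in> dual n {v. length v = n}"
      using vw by (auto simp: dual_def)
    then show ?thesis using Suc vw by (simp add: zeros_def)
  qed
  then show ?case by (auto simp: dual_def)
qed

lemma dot_append_plotkin:
  assumes "length a = n" "length b = n" "length u = n" "length v = n"
  shows "dot (a @ b) (u @ vadd u v) = dot (vadd a b) u + dot b v"
  using assms by (simp add: dot_append dot_vadd_left dot_vadd_right add.assoc)

lemma append_in_dual_plotkin_iff:
  assumes U: "\<forall>u\<in>U. length u = n" and V: "\<forall>v\<in>V. length v = n"
    and "zeros n \<in> U" "zeros n \<in> V" and ab: "length a = n" "length b = n"
  shows "a @ b \<in> dual (n + n) (plotkin U V) \<longleftrightarrow> vadd a b \<in> dual n U \<and> b \<in> dual n V"
proof -
  have "a @ b \<in> dual (n + n) (plotkin U V) \<longleftrightarrow>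
      (\<forall>u\<in>U. \<forall>v\<in>V. dot (a @ b) (u @ vadd u v) = 0)"
    using ab by (auto simp: dual_def plotkin_def)
  also have "\<dots> \<longleftrightarrow> (\<forall>u\<in>U. \<forall>v\<in>V. dot (vadd a b) u + dot b v = 0)"
    using U V ab by (simp add: dot_append_plotkin)
  also have "\<dots> \<longleftrightarrow> (\<forall>u\<in>U. dot (vadd a b) u = 0) \<and> (\<forall>v\<in>V. dot b v = 0)"
    using assms(3,4) by fastforce
  finally show ?thesis using ab by (simp add: dual_def)
qed

lemma dual_plotkin:
  assumes U: "\<forall>u\<in>U. length u = n" and V: "\<forall>v\<in>V. length v = n"
    and "V \<subseteq> U" "zeros n \<in> V"
  shows "dual (n + n) (plotkin U V) = plotkin (dual n V) (dual n U)"
proof (rule append_halves_set_eqI)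
  show "\<forall>x\<in>dual (n + n) (plotkin U V). length x = n + n"
    by (simp add: length_dual)
  show "\<forall>x\<in>plotkin (dual n V) (dual n U). length x = n + n"
    by (intro ballI length_plotkin[of _ n]) (simp_all add: length_dual)
next
  fix a b :: bvec assume ab: "length a = n" "length b = n"
  have "b \<in> dual n V \<longleftrightarrow> a \<in> dual n V" if "vadd a b \<in> dual n V"
  proof -
    have "vadd b (vadd a b) = a" "vadd a (vadd a b) = b"
      using ab by (metis vadd_cancel_left vadd_commute)+
    then show ?thesis using vadd_in_dual[OF V _ that] by metis
  qed
  moreover have
    "a @ b \<in> dual (n + n) (plotkin U V) \<longleftrightarrow> vadd a b \<in> dual n U \<and> b \<in> dual n V"
    using assms ab by (intro append_in_dual_plotkin_iff) auto
  moreover have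
    "a @ b \<in> plotkin (dual n V) (dual n U) \<longleftrightarrow> a \<in> dual n V \<and> vadd a b \<in> dual n U"
    using ab by (intro append_in_plotkin_iff) (auto simp: length_dual)
  ultimately show
    "a @ b \<in> dual (n + n) (plotkin U V) \<longleftrightarrow> a @ b \<in> plotkin (dual n V) (dual n U)"
    using dual_antimono[OF \<open>V \<subseteq> U\<close>] by blast
qed

section \<open>Reed--Muller codes via the Plotkin recursion\<close>

fun rm_code :: "int \<Rightarrow> nat \<Rightarrow> bvec set" where
  "rm_code s 0 = (if s < 0 then {zeros 1} else {v. length v = 1})"
| "rm_code s (Suc m) = plotkin (rm_code s m) (rm_code (s - 1) m)"

lemma length_rm_code: "v \<in> rm_code s m \<Longrightarrow> length v = 2 ^ m"
proof (induction m arbitrary: s v)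
  case 0
  then show ?case by (auto split: if_splits)
next
  case (Suc m)
  then show ?case unfolding power_Suc mult_2 by (auto intro: length_plotkin)
qed

lemma zeros_in_rm_code: "zeros (2 ^ m) \<in> rm_code s m"
proof (induction m arbitrary: s)
  case (Suc m)
  have "zeros (2 ^ m) @ vadd (zeros (2 ^ m)) (zeros (2 ^ m)) \<in> rm_code s (Suc m)"
    using Suc.IH by (auto simp: plotkin_def)
  then show ?case by (simp add: vadd_self mult_2 zeros_add)
qed simp

lemma rm_code_neg: "s < 0 \<Longrightarrow> rm_code s m = {zeros (2 ^ m)}"
proof (induction m arbitrary: s)
  case (Suc m)
  then show ?case by (simp add: plotkin_zeros mult_2 zeros_add)
qed simp

lemma rm_code_full: "int m \<le> s \<Longrightarrow> rm_code s m = {v. length v = 2 ^ m}"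
proof (induction m arbitrary: s)
  case (Suc m)
  then show ?case unfolding power_Suc mult_2 by (simp add: plotkin_full)
qed simp

lemma rm_code_0: "rm_code 0 m = {zeros (2 ^ m), ones (2 ^ m)}"
proof (induction m)
  case 0
  show ?case by (auto simp: zeros_def ones_def length_Suc_conv intro: bit.exhaust)
next
  case (Suc m)
  then have "rm_code 0 (Suc m) = plotkin {zeros (2 ^ m), ones (2 ^ m)} {zeros (2 ^ m)}"
    by (simp add: rm_code_neg)
  also have "\<dots> = {zeros (2 ^ m) @ zeros (2 ^ m), ones (2 ^ m) @ ones (2 ^ m)}"
    by (simp add: plotkin_zeros)
  also have "\<dots> = {zeros (2 ^ Suc m), ones (2 ^ Suc m)}"
    by (simp add: mult_2 zeros_add ones_add)
  finally show ?case .
qed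

lemma rm_code_mono: "s \<le> t \<Longrightarrow> rm_code s m \<subseteq> rm_code t m"
proof (induction m arbitrary: s t)
  case (Suc m)
  then show ?case by (simp add: plotkin_mono)
qed auto

lemma dual_rm_code: "dual (2 ^ m) (rm_code s m) = rm_code (int m - s - 1) m"
proof (induction m arbitrary: s)
  case 0
  then show ?case by (simp add: dual_zeros dual_full)
next
  case (Suc m)
  have "dual (2 ^ Suc m) (rm_code s (Suc m)) =
      plotkin (dual (2 ^ m) (rm_code (s - 1) m)) (dual (2 ^ m) (rm_code s m))"
    unfolding rm_code.simps power_Suc mult_2
    by (rule dual_plotkin) (auto simp: length_rm_code zeros_in_rm_code rm_code_mono)
  also have "\<dots> = rm_code (int (Suc m) - s - 1) (Suc m)"
    by (simp add: Suc algebra_simps)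
  finally show ?case .
qed

lemma length_G_rows: "r \<le> m \<Longrightarrow> \<forall>row\<in>set (G r m). length row = 2 ^ m"
proof (induction m arbitrary: r)
  case (Suc m)
  have "\<forall>row\<in>set (G r (Suc m)). length row = 2 ^ Suc m" if "0 < r" "r < Suc m"
    unfolding power_Suc mult_2
    using that length_blk2_rows[OF Suc.IH Suc.IH, of r "r - 1"] by simp
  then show ?case by (auto simp: idm_def)
qed (auto simp: idm_def)

lemma rowspace_G: "r \<le> m \<Longrightarrow> rowspace (2 ^ m) (G r m) = rm_code (int r) m"
proof (induction m arbitrary: r)
  case 0
  then show ?case by (simp add: rowspace_idm)
next
  case (Suc m)
  consider "r = Suc m" | "r = 0" | "0 < r" "r \<le> m"
    using Suc.prems by linarith
  then show ?case
  proof cases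
    case 1
    then show ?thesis by (simp add: rowspace_idm rm_code_full del: rm_code.simps)
  next
    case 2
    then show ?thesis by (simp add: rowspace_ones rm_code_0 del: rm_code.simps)
  next
    case 3
    then have "rowspace (2 ^ Suc m) (G r (Suc m)) =
        plotkin (rowspace (2 ^ m) (G r m)) (rowspace (2 ^ m) (G (r - 1) m))"
      unfolding power_Suc mult_2
      using rowspace_blk2[OF length_G_rows length_G_rows, of r m "r - 1"] by simp
    with 3 show ?thesis by (simp add: Suc.IH of_nat_diff)
  qed
qed

lemma length_H_rows: "r \<le> m \<Longrightarrow> \<forall>row\<in>set (H r m). length row = 2 ^ m"
proof (induction m arbitrary: r)
  case (Suc m)
  have "\<forall>row\<in>set (H r (Suc m)). length row = 2 ^ Suc m" if "0 < r" "r < m"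
    unfolding power_Suc mult_2
    using that length_blk3_rows[OF Suc.IH Suc.IH, of r "r - 1"] by simp
  then show ?case
    using Suc.prems length_G_rows[of m "Suc m"] by (auto simp: idm_def simp del: G.simps)
qed simp

lemma rowspace_H: "r \<le> m \<Longrightarrow> rowspace (2 ^ m) (H r m) = rm_code (int r) m"
proof (induction m arbitrary: r)
  case 0
  then show ?case by (simp add: rowspace_ones rm_code_0 del: rm_code.simps)
next
  case (Suc m)
  consider "r = Suc m" | "r = 0" | "r = m" "0 < m" | "0 < r" "r < m"
    using Suc.prems by linarith
  then show ?case
  proof cases
    case 1
    then show ?thesis by (simp add: rowspace_idm rm_code_full del: rm_code.simps)
  next
    case 2
    then show ?thesis by (simp add: rowspace_ones rm_code_0 del: rm_code.simps)
  next
    case 3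
    then show ?thesis using rowspace_G[of m "Suc m"] by simp
  next
    case 4
    have "rowspace (2 ^ m) (H (r - 1) m) \<subseteq> rowspace (2 ^ m) (H r m)"
      using 4 by (simp add: Suc.IH rm_code_mono)
    with 4 have "rowspace (2 ^ Suc m) (H r (Suc m)) =
        plotkin (rowspace (2 ^ m) (H r m)) (rowspace (2 ^ m) (H (r - 1) m))"
      unfolding power_Suc mult_2
      using rowspace_blk3[OF length_H_rows length_H_rows, of r m "r - 1"] by simp
    with 4 show ?thesis by (simp add: Suc.IH of_nat_diff)
  qed
qed

lemma RM_eq_rm_code: "s \<le> int m \<Longrightarrow> RM s m = rm_code s m"
  by (simp add: RM_def rm_code_neg rowspace_G)

theorem proposition10:
  fixes r m :: nat
  assumes "r \<le> m"
  shows "is_generator_matrix (2 ^ m) (H r m) (RM (int r) m) \<and>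
         is_parity_check_matrix (2 ^ m) (H r m) (RM (int m - int r - 1) m)"
proof -
  have "rowspace (2 ^ m) (H r m) = RM (int r) m"
    using assms by (simp add: rowspace_H RM_eq_rm_code)
  moreover have "dual (2 ^ m) (RM (int m - int r - 1) m) = RM (int r) m"
    using assms by (simp add: RM_eq_rm_code dual_rm_code)
  ultimately show ?thesis
    using length_H_rows[OF assms]
    by (simp add: is_generator_matrix_def is_parity_check_matrix_def)
qed

end
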